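(* Let $n$ individuals be connected by a directed graph with in-neighborhoods $\mathcal N_i$ (self-loops allowed), and suppose the potential outcomes are linear: $Y_i(\mathbf z)=c_{i,\emptyset}+\sum_{j\in\mathcal N_i}c_{ij}z_j$. Let $\mathrm{TTE}=\frac1n\sum_i(Y_i(\mathbf 1)-Y_i(\mathbf 0))$. Suppose a staggered rollout Bernoulli design is implemented with $T+1$ distinct treatment probabilities $0\le p_0<p_1<\dots<p_T\le1$ ($u_i\sim U[0,1]$ i.i.d., $z_i^t=\mathbb I(u_i\le p_t)$), and the outcomes $Y_i(\mathbf z^t)$ are observed without noise. Then among estimators of the form $$\widehat{\mathrm{TTE}}=\frac1n\sum_{i=1}^n\sum_{t=0}^T\alpha_tY_i(\mathbf z^t)$$ (with constants $\alpha_t$) that are unbiased for $\mathrm{TTE}$, the one minimizing variance has $\alpha_0=\frac{-1}{p_T-p_0}$, $\alpha_T=\frac1{p_T-p_0}$, and $\alpha_1=\dots=\alpha_{T-1}=0$.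
   Context: Unbiasedness is understood as $\mathbb E[\widehat{\mathrm{TTE}}]=\mathrm{TTE}$ for every choice of the linear model coefficients $c_{i,\emptyset},c_{ij}$. *)

theory Defs
  imports "HOL-Probability.Probability"
begin

definition outcome :: "(nat \<Rightarrow> real) \<Rightarrow> (nat \<Rightarrow> nat \<Rightarrow> real) \<Rightarrow> (nat \<Rightarrow> nat set)
    \<Rightarrow> nat \<Rightarrow> (nat \<Rightarrow> real) \<Rightarrow> real" where
  "outcome c0 c N i z = c0 i + (\<Sum>j\<in>N i. c i j * z j)"

definition TTE :: "nat \<Rightarrow> (nat \<Rightarrow> real) \<Rightarrow> (nat \<Rightarrow> nat \<Rightarrow> real) \<Rightarrow> (nat \<Rightarrow> nat set) \<Rightarrow> real" where
  "TTE n c0 c N = (1 / real n) * (\<Sum>i<n. outcome c0 c N i (\<lambda>_. 1) - outcome c0 c N i (\<lambda>_. 0))"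

definition treat :: "(nat \<Rightarrow> real) \<Rightarrow> nat \<Rightarrow> (nat \<Rightarrow> real) \<Rightarrow> nat \<Rightarrow> real" where
  "treat p t u = (\<lambda>j. if u j \<le> p t then 1 else 0)"

definition rollout_space :: "nat \<Rightarrow> (nat \<Rightarrow> real) measure" where
  "rollout_space n = PiM {..<n} (\<lambda>_. uniform_measure lborel {0..1::real})"

definition estimator :: "nat \<Rightarrow> nat \<Rightarrow> (nat \<Rightarrow> real) \<Rightarrow> (nat \<Rightarrow> real) \<Rightarrow> (nat \<Rightarrow> nat \<Rightarrow> real)
    \<Rightarrow> (nat \<Rightarrow> nat set) \<Rightarrow> (nat \<Rightarrow> real) \<Rightarrow> (nat \<Rightarrow> real) \<Rightarrow> real" where
  "estimator n T alpha c0 c N p u =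
     (1 / real n) * (\<Sum>i<n. \<Sum>t\<le>T. alpha t * outcome c0 c N i (treat p t u))"

definition est_mean where
  "est_mean n T alpha c0 c N p = (\<integral>u. estimator n T alpha c0 c N p u \<partial>rollout_space n)"

definition est_var where
  "est_var n T alpha c0 c N p =
     (\<integral>u. (estimator n T alpha c0 c N p u - est_mean n T alpha c0 c N p)\<^sup>2 \<partial>rollout_space n)"

definition unbiased :: "nat \<Rightarrow> nat \<Rightarrow> (nat \<Rightarrow> nat set) \<Rightarrow> (nat \<Rightarrow> real) \<Rightarrow> (nat \<Rightarrow> real) \<Rightarrow> bool" where
  "unbiased n T N p alpha \<longleftrightarrow> (\<forall>c0 c. est_mean n T alpha c0 c N p = TTE n c0 c N)"

end

theory Submission
  imports Defs
begin

(* Writing W j for the total effect of unit j on all outcomes and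
   X x = \<Sum>t. alpha t * [x \<le> p t] for the alpha-weighted treatment path of a unit with
   draw x, the estimator is (\<Sum>alpha * \<Sum>c0 + \<Sum>j. W j * X (u j)) / n, a constant plus a
   weighted sum of i.i.d. copies of X.  Hence (as soon as the graph has an edge) it is
   unbiased for every linear model iff \<Sum>alpha = 0 and E X = 1, and its variance is
   (\<Sum>j. (W j)^2) / n^2 * Var X.
   Since \<Sum>alpha = 0, X vanishes outside (p 0, p T], so Cauchy-Schwarz gives
   E X^2 \<ge> (E X)^2 / (p T - p 0) = 1 / (p T - p 0), with equality when X is
   constant on that interval, i.e. for the weights at the first and last stage. *)

lemma distr_PiM_iid_component:
  assumes "prob_space M" "j \<in> I"
  shows "distr (Pi\<^sub>M I (\<lambda>_. M)) M (\<lambda>u. u j) = M"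
  using distr_PiM_component[of I "\<lambda>_. M" j] assms by simp

lemma integrable_PiM_component:
  fixes f :: "'a \<Rightarrow> real"
  assumes "prob_space M" "j \<in> I" "integrable M f"
  shows "integrable (Pi\<^sub>M I (\<lambda>_. M)) (\<lambda>u. f (u j))"
proof -
  have "integrable (distr (Pi\<^sub>M I (\<lambda>_. M)) M (\<lambda>u. u j)) f"
    using assms by (simp add: distr_PiM_iid_component)
  then show ?thesis
    using assms by (subst (asm) integrable_distr_eq) (auto intro: measurable_component_singleton)
qed

lemma integral_PiM_component:
  fixes f :: "'a \<Rightarrow> real"
  assumes "prob_space M" "j \<in> I" "f \<in> borel_measurable M"
  shows "(\<integral>u. f (u j) \<partial>Pi\<^sub>M I (\<lambda>_. M)) = (\<integral>x. f x \<partial>M)"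
proof -
  have "(\<integral>x. f x \<partial>distr (Pi\<^sub>M I (\<lambda>_. M)) M (\<lambda>u. u j)) = (\<integral>u. f (u j) \<partial>Pi\<^sub>M I (\<lambda>_. M))"
    using assms by (intro integral_distr measurable_component_singleton) auto
  then show ?thesis
    using assms by (simp add: distr_PiM_iid_component)
qed

lemma integral_PiM_two_components:
  fixes f g :: "'a \<Rightarrow> real" and I :: "'i set"
  assumes M: "prob_space M" and "finite I" "j \<in> I" "k \<in> I" "j \<noteq> k"
    and "integrable M f" "integrable M g"
  shows "(\<integral>u. f (u j) * g (u k) \<partial>Pi\<^sub>M I (\<lambda>_. M)) = (\<integral>x. f x \<partial>M) * (\<integral>x. g x \<partial>M)"
proof -
  interpret M: prob_space M
    by (rule M)
  interpret product_sigma_finite "\<lambda>_. M"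
    by (simp add: product_sigma_finite_def M.sigma_finite_measure_axioms)
  define h where "h i = (if i = j then f else if i = k then g else (\<lambda>_. 1))" for i
  have "(\<Prod>i\<in>I. h i (x i)) = h j (x j) * h k (x k) * (\<Prod>i\<in>I - {j, k}. h i (x i))"
    for x :: "'i \<Rightarrow> 'a"
    using assms by (subst prod.subset_diff[of "{j, k}"]) auto
  then have "(\<Prod>i\<in>I. h i (x i)) = f (x j) * g (x k)" for x
    using assms by (simp add: h_def)
  moreover have "(\<integral>x. (\<Prod>i\<in>I. h i (x i)) \<partial>Pi\<^sub>M I (\<lambda>_. M)) = (\<Prod>i\<in>I. integral\<^sup>L M (h i))"
    using assms by (intro product_integral_prod) (auto simp: h_def)
  moreover have "(\<Prod>i\<in>I. integral\<^sup>L M (h i)) = integral\<^sup>L M f * integral\<^sup>L M g"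
    using assms by (subst prod.subset_diff[of "{j, k}"]) (auto simp: h_def M.prob_space)
  ultimately show ?thesis
    by simp
qed

lemma integral_PiM_weighted_sum:
  fixes X :: "'a \<Rightarrow> real"
  assumes "prob_space M" "finite I" "integrable M X"
  shows "(\<integral>u. (\<Sum>j\<in>I. w j * X (u j)) \<partial>Pi\<^sub>M I (\<lambda>_. M)) = sum w I * (\<integral>x. X x \<partial>M)"
  using assms
  by (simp add: Bochner_Integration.integral_sum integrable_PiM_component integral_PiM_component
      sum_distrib_right)

lemma integral_PiM_square_weighted_sum:
  fixes Y :: "'a \<Rightarrow> real"
  assumes M: "prob_space M" and I: "finite I"
    and Y: "Y \<in> borel_measurable M" "\<And>x. \<bar>Y x\<bar> \<le> B" "(\<integral>x. Y x \<partial>M) = 0"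
  shows "(\<integral>u. (\<Sum>j\<in>I. w j * Y (u j))\<^sup>2 \<partial>Pi\<^sub>M I (\<lambda>_. M))
    = (\<Sum>j\<in>I. (w j)\<^sup>2) * (\<integral>x. (Y x)\<^sup>2 \<partial>M)"
proof -
  interpret M: prob_space M
    by (rule M)
  interpret P: prob_space "Pi\<^sub>M I (\<lambda>_. M)"
    by (simp add: M prob_space_PiM)
  have YY_bound: "\<bar>Y x * Y y\<bar> \<le> B * B" for x y
    using Y(2)[of x] Y(2)[of y] by (simp add: abs_mult mult_mono')
  have Y_int: "integrable M Y"
    using Y by (auto intro!: M.integrable_const_bound[where B = B])
  have YY_int: "integrable M (\<lambda>x. Y x * Y x)"
  proof (rule M.integrable_const_bound[where B = "B * B"])
    show "AE x in M. norm (Y x * Y x) \<le> B * B"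
      using YY_bound by (simp only: real_norm_def AE_I2)
  qed (use Y(1) in simp)
  have jk_int: "integrable (Pi\<^sub>M I (\<lambda>_. M)) (\<lambda>u. Y (u j) * Y (u k))" if "j \<in> I" "k \<in> I" for j k
  proof (rule P.integrable_const_bound[where B = "B * B"])
    have "(\<lambda>u. Y (u i)) \<in> borel_measurable (Pi\<^sub>M I (\<lambda>_. M))" if "i \<in> I" for i
      using measurable_compose[OF measurable_component_singleton[OF that] Y(1)] .
    then show "(\<lambda>u. Y (u j) * Y (u k)) \<in> borel_measurable (Pi\<^sub>M I (\<lambda>_. M))"
      using \<open>j \<in> I\<close> \<open>k \<in> I\<close> by (intro borel_measurable_times)
  qed (use YY_bound in simp)
  have jk: "w j * w k * (\<integral>u. Y (u j) * Y (u k) \<partial>Pi\<^sub>M I (\<lambda>_. M))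
      = (if k = j then (w j)\<^sup>2 * (\<integral>x. (Y x)\<^sup>2 \<partial>M) else 0)"
    if "j \<in> I" "k \<in> I" for j k
    using that I Y Y_int YY_int M integral_PiM_component[of M j I "\<lambda>x. Y x * Y x"]
    by (auto simp: integral_PiM_two_components power2_eq_square)
  have "(\<Sum>j\<in>I. w j * Y (u j))\<^sup>2 = (\<Sum>j\<in>I. \<Sum>k\<in>I. w j * w k * (Y (u j) * Y (u k)))" for u
    by (simp add: power2_eq_square sum_product mult_ac)
  then have "(\<integral>u. (\<Sum>j\<in>I. w j * Y (u j))\<^sup>2 \<partial>Pi\<^sub>M I (\<lambda>_. M))
      = (\<Sum>j\<in>I. \<Sum>k\<in>I. w j * w k * (\<integral>u. Y (u j) * Y (u k) \<partial>Pi\<^sub>M I (\<lambda>_. M)))"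
    by (simp add: Bochner_Integration.integral_sum jk_int)
  also have "\<dots> = (\<Sum>j\<in>I. (w j)\<^sup>2) * (\<integral>x. (Y x)\<^sup>2 \<partial>M)"
    using I by (simp add: jk sum_distrib_right cong: sum.cong)
  finally show ?thesis .
qed

lemma square_integral_le_measure_mult_integral_square:
  fixes f :: "'a \<Rightarrow> real"
  assumes M: "finite_measure M" and A: "A \<in> sets M" "0 < measure M A"
    and f: "integrable M f" "integrable M (\<lambda>x. (f x)\<^sup>2)"
    and vanish: "\<And>x. x \<in> space M \<Longrightarrow> x \<notin> A \<Longrightarrow> f x = 0"
  shows "(\<integral>x. f x \<partial>M)\<^sup>2 \<le> measure M A * (\<integral>x. (f x)\<^sup>2 \<partial>M)"
proof -
  interpret finite_measure M
    by (rule M)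
  define L where "L = measure M A"
  define m where "m = (\<integral>x. f x \<partial>M)"
  have ind: "integrable M (indicator A :: 'a \<Rightarrow> real)"
    using A by (simp add: emeasure_eq_measure)
  have expand: "(L * f x - m * indicator A x)\<^sup>2 = L\<^sup>2 * (f x)\<^sup>2 - 2 * L * m * f x + m\<^sup>2 * indicator A x"
    if "x \<in> space M" for x
    using vanish[OF that] by (cases "x \<in> A") (simp_all add: power2_eq_square algebra_simps)
  have "0 \<le> (\<integral>x. (L * f x - m * indicator A x)\<^sup>2 \<partial>M)"
    by (intro Bochner_Integration.integral_nonneg) simp
  also have "\<dots> = (\<integral>x. L\<^sup>2 * (f x)\<^sup>2 - 2 * L * m * f x + m\<^sup>2 * indicator A x \<partial>M)"
    using expand by (rule Bochner_Integration.integral_cong[OF refl])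
  also have "\<dots> = (\<integral>x. L\<^sup>2 * (f x)\<^sup>2 \<partial>M) - (\<integral>x. 2 * L * m * f x \<partial>M)
      + (\<integral>x. m\<^sup>2 * indicator A x \<partial>M)"
  proof -
    have i: "integrable M (\<lambda>x. L\<^sup>2 * (f x)\<^sup>2)" "integrable M (\<lambda>x. 2 * L * m * f x)"
      "integrable M (\<lambda>x. m\<^sup>2 * indicator A x)"
      using f ind by simp_all
    show ?thesis
      using Bochner_Integration.integral_add[OF Bochner_Integration.integrable_diff[OF i(1,2)] i(3)]
        Bochner_Integration.integral_diff[OF i(1,2)] by simp
  qed
  also have "\<dots> = L\<^sup>2 * (\<integral>x. (f x)\<^sup>2 \<partial>M) - 2 * L * m * m + m\<^sup>2 * L"
    using sets.sets_into_space[OF A(1)] by (simp add: L_def m_def Int_absorb2)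
  also have "\<dots> = L * (L * (\<integral>x. (f x)\<^sup>2 \<partial>M) - m\<^sup>2)"
    by (simp add: power2_eq_square algebra_simps)
  finally have "0 \<le> L * (L * (\<integral>x. (f x)\<^sup>2 \<partial>M) - m\<^sup>2)" .
  then show ?thesis
    using A by (simp add: L_def m_def zero_le_mult_iff)
qed

abbreviation uniform01 :: "real measure" where
  "uniform01 \<equiv> uniform_measure lborel {0..1}"

lemma prob_space_uniform01: "prob_space uniform01"
  by (rule prob_space_uniform_measure) auto

lemma finite_measure_uniform01: "finite_measure uniform01"
  by (rule prob_space.finite_measure[OF prob_space_uniform01])

lemma measure_uniform01_greaterThanAtMost:
  assumes "0 \<le> a" "a \<le> b" "b \<le> 1"
  shows "measure uniform01 {a<..b} = b - a"
proof -
  have "{0..1} \<inter> {a<..b} = {a<..b}"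
    using assms by auto
  then show ?thesis
    using assms by simp
qed

lemma prob_space_rollout_space: "prob_space (rollout_space n)"
  unfolding rollout_space_def by (intro prob_space_PiM prob_space_uniform01)

definition weighted_treatment :: "(nat \<Rightarrow> real) \<Rightarrow> (nat \<Rightarrow> real) \<Rightarrow> nat \<Rightarrow> real \<Rightarrow> real" where
  "weighted_treatment alpha p T x = (\<Sum>t\<le>T. alpha t * (if x \<le> p t then 1 else 0))"

lemma borel_measurable_weighted_treatment [measurable]:
  "weighted_treatment alpha p T \<in> borel_measurable borel"
  unfolding weighted_treatment_def by measurable

lemma abs_weighted_treatment_le: "\<bar>weighted_treatment alpha p T x\<bar> \<le> (\<Sum>t\<le>T. \<bar>alpha t\<bar>)"
  unfolding weighted_treatment_def
  by (rule order_trans[OF sum_abs sum_mono]) (simp add: abs_mult)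

lemma integrable_weighted_treatment: "integrable uniform01 (weighted_treatment alpha p T)"
  by (rule finite_measure.integrable_const_bound[OF finite_measure_uniform01])
    (auto intro: abs_weighted_treatment_le)

lemma integrable_weighted_treatment_square:
  "integrable uniform01 (\<lambda>x. (weighted_treatment alpha p T x)\<^sup>2)"
proof (rule finite_measure.integrable_const_bound[OF finite_measure_uniform01,
      where B = "(\<Sum>t\<le>T. \<bar>alpha t\<bar>)\<^sup>2"])
  show "AE x in uniform01. norm ((weighted_treatment alpha p T x)\<^sup>2) \<le> (\<Sum>t\<le>T. \<bar>alpha t\<bar>)\<^sup>2"
    using power_mono[OF abs_weighted_treatment_le abs_ge_zero, of _ _ _ _ 2] by simp
qed simp

lemma weighted_treatment_eq_0_outside:
  assumes "sum alpha {..T} = 0" "\<And>t. t \<le> T \<Longrightarrow> p 0 \<le> p t \<and> p t \<le> p T" "x \<notin> {p 0<..p T}"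
  shows "weighted_treatment alpha p T x = 0"
proof (cases "x \<le> p 0")
  case True
  then have "weighted_treatment alpha p T x = sum alpha {..T}"
    using assms(2) unfolding weighted_treatment_def by (intro sum.cong) (auto dest: order_trans)
  then show ?thesis
    using assms(1) by simp
next
  case False
  then have "p T < x"
    using assms(3) by auto
  then show ?thesis
    using assms(2) unfolding weighted_treatment_def by (intro sum.neutral) force
qed

lemma variance_weighted_treatment:
  "(\<integral>x. (weighted_treatment alpha p T x - (\<integral>x. weighted_treatment alpha p T x \<partial>uniform01))\<^sup>2 \<partial>uniform01)
    = (\<integral>x. (weighted_treatment alpha p T x)\<^sup>2 \<partial>uniform01) - (\<integral>x. weighted_treatment alpha p T x \<partial>uniform01)\<^sup>2"
  by (rule prob_space.variance_eq[OF prob_space_uniform01 integrable_weighted_treatment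
        integrable_weighted_treatment_square])

lemma second_moment_weighted_treatment_ge:
  assumes p: "0 \<le> p 0" "p 0 < p T" "p T \<le> 1" "\<And>t. t \<le> T \<Longrightarrow> p 0 \<le> p t \<and> p t \<le> p T"
    and alpha: "sum alpha {..T} = 0" "(\<integral>x. weighted_treatment alpha p T x \<partial>uniform01) = 1"
  shows "1 / (p T - p 0) \<le> (\<integral>x. (weighted_treatment alpha p T x)\<^sup>2 \<partial>uniform01)"
proof -
  have A: "measure uniform01 {p 0<..p T} = p T - p 0"
    using p by (intro measure_uniform01_greaterThanAtMost) auto
  have "(\<integral>x. weighted_treatment alpha p T x \<partial>uniform01)\<^sup>2
      \<le> measure uniform01 {p 0<..p T} * (\<integral>x. (weighted_treatment alpha p T x)\<^sup>2 \<partial>uniform01)"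
    using p by (intro square_integral_le_measure_mult_integral_square finite_measure_uniform01
        integrable_weighted_treatment integrable_weighted_treatment_square weighted_treatment_eq_0_outside[OF alpha(1)])
      (simp_all add: A del: measure_uniform_measure)
  then show ?thesis
    using p alpha(2) by (simp add: A field_simps del: measure_uniform_measure)
qed

definition extreme_stage_weights :: "(nat \<Rightarrow> real) \<Rightarrow> nat \<Rightarrow> nat \<Rightarrow> real" where
  "extreme_stage_weights p T t = (if t = 0 then -1 / (p T - p 0) else if t = T then 1 / (p T - p 0) else 0)"

lemma sum_extreme_stage_weights:
  assumes "1 \<le> T"
  shows "(\<Sum>t\<le>T. extreme_stage_weights p T t * f t) = (f T - f 0) / (p T - p 0)"
proof -
  have "(\<Sum>t\<le>T. extreme_stage_weights p T t * f t) = (\<Sum>t\<in>{0, T}. extreme_stage_weights p T t * f t)"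
    by (rule sum.mono_neutral_right) (auto simp: extreme_stage_weights_def)
  then show ?thesis
    using assms by (simp add: extreme_stage_weights_def diff_divide_distrib)
qed

lemma weighted_treatment_extreme_stage_weights:
  assumes "1 \<le> T" "p 0 \<le> p T"
  shows "weighted_treatment (extreme_stage_weights p T) p T x = indicator {p 0<..p T} x / (p T - p 0)"
  using assms unfolding weighted_treatment_def sum_extreme_stage_weights[OF assms(1)]
  by (auto simp: indicator_def)

lemma moments_weighted_treatment_extreme_stage_weights:
  assumes "1 \<le> T" "0 \<le> p 0" "p 0 < p T" "p T \<le> 1"
  shows "(\<integral>x. weighted_treatment (extreme_stage_weights p T) p T x \<partial>uniform01) = 1"
    and "(\<integral>x. (weighted_treatment (extreme_stage_weights p T) p T x)\<^sup>2 \<partial>uniform01) = 1 / (p T - p 0)"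
proof -
  have A: "measure uniform01 {p 0<..p T} = p T - p 0"
    using assms by (intro measure_uniform01_greaterThanAtMost) auto
  have X: "weighted_treatment (extreme_stage_weights p T) p T = (\<lambda>x. indicator {p 0<..p T} x / (p T - p 0))"
    using assms by (simp add: fun_eq_iff weighted_treatment_extreme_stage_weights)
  have X2: "(\<lambda>x. (weighted_treatment (extreme_stage_weights p T) p T x)\<^sup>2)
      = (\<lambda>x. indicator {p 0<..p T} x / (p T - p 0)\<^sup>2)"
    using assms by (simp add: fun_eq_iff weighted_treatment_extreme_stage_weights power_divide indicator_def)
  show "(\<integral>x. weighted_treatment (extreme_stage_weights p T) p T x \<partial>uniform01) = 1"
    using assms unfolding X by (simp add: A del: measure_uniform_measure)
  show "(\<integral>x. (weighted_treatment (extreme_stage_weights p T) p T x)\<^sup>2 \<partial>uniform01) = 1 / (p T - p 0)"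
    using assms unfolding X2 by (simp add: A power2_eq_square del: measure_uniform_measure)
qed

definition total_effect :: "(nat \<Rightarrow> nat set) \<Rightarrow> (nat \<Rightarrow> nat \<Rightarrow> real) \<Rightarrow> nat \<Rightarrow> nat \<Rightarrow> real" where
  "total_effect N c n j = (\<Sum>i<n. if j \<in> N i then c i j else 0)"

lemma sum_neighbourhoods_eq_total_effect:
  assumes "\<forall>i<n. N i \<subseteq> {..<n}"
  shows "(\<Sum>i<n. \<Sum>j\<in>N i. c i j * x j) = (\<Sum>j<n. total_effect N c n j * x j)"
proof -
  have "(\<Sum>j\<in>N i. c i j * x j) = (\<Sum>j<n. if j \<in> N i then c i j * x j else 0)" if "i < n" for i
    using assms that by (simp add: sum.inter_restrict[symmetric] Int_absorb1)
  then have "(\<Sum>i<n. \<Sum>j\<in>N i. c i j * x j) = (\<Sum>i<n. \<Sum>j<n. if j \<in> N i then c i j * x j else 0)"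
    by simp
  also have "\<dots> = (\<Sum>j<n. \<Sum>i<n. if j \<in> N i then c i j * x j else 0)"
    by (rule sum.swap)
  also have "\<dots> = (\<Sum>j<n. total_effect N c n j * x j)"
    unfolding total_effect_def sum_distrib_right by (intro sum.cong refl) simp
  finally show ?thesis .
qed

lemma TTE_eq_total_effect:
  assumes "\<forall>i<n. N i \<subseteq> {..<n}"
  shows "TTE n c0 c N = (1 / real n) * (\<Sum>j<n. total_effect N c n j)"
  using sum_neighbourhoods_eq_total_effect[OF assms, of c "\<lambda>_. 1"]
  by (simp add: TTE_def outcome_def)

lemma estimator_eq_total_effect:
  assumes "\<forall>i<n. N i \<subseteq> {..<n}"
  shows "estimator n T alpha c0 c N p u = (1 / real n) * (sum alpha {..T} * sum c0 {..<n}
    + (\<Sum>j<n. total_effect N c n j * weighted_treatment alpha p T (u j)))"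
proof -
  have "(\<Sum>t\<le>T. alpha t * outcome c0 c N i (treat p t u))
      = sum alpha {..T} * c0 i + (\<Sum>j\<in>N i. c i j * weighted_treatment alpha p T (u j))" for i
    unfolding outcome_def treat_def weighted_treatment_def
    by (simp add: distrib_left sum.distrib sum_distrib_left sum_distrib_right mult_ac sum.swap[of _ "{..T}"])
  then show ?thesis
    using sum_neighbourhoods_eq_total_effect[OF assms]
    by (simp add: estimator_def sum.distrib sum_distrib_left)
qed

lemma est_mean_eq_total_effect:
  assumes "\<forall>i<n. N i \<subseteq> {..<n}"
  shows "est_mean n T alpha c0 c N p = (1 / real n) * (sum alpha {..T} * sum c0 {..<n}
    + (\<Sum>j<n. total_effect N c n j) * (\<integral>x. weighted_treatment alpha p T x \<partial>uniform01))"
proof -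
  interpret R: prob_space "rollout_space n"
    by (rule prob_space_rollout_space)
  let ?S = "\<lambda>u. \<Sum>j<n. total_effect N c n j * weighted_treatment alpha p T (u j)"
  have "integrable (rollout_space n) ?S"
    unfolding rollout_space_def
    by (intro Bochner_Integration.integrable_sum integrable_mult_right integrable_PiM_component
        prob_space_uniform01 integrable_weighted_treatment) auto
  then have "est_mean n T alpha c0 c N p
      = (1 / real n) * (sum alpha {..T} * sum c0 {..<n} + (\<integral>u. ?S u \<partial>rollout_space n))"
    unfolding est_mean_def estimator_eq_total_effect[OF assms]
    by (simp add: Bochner_Integration.integral_add[OF R.integrable_const] R.prob_space)
  also have "(\<integral>u. ?S u \<partial>rollout_space n)
      = (\<Sum>j<n. total_effect N c n j) * (\<integral>x. weighted_treatment alpha p T x \<partial>uniform01)"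
    unfolding rollout_space_def
    by (rule integral_PiM_weighted_sum[OF prob_space_uniform01 finite_lessThan integrable_weighted_treatment])
  finally show ?thesis .
qed

lemma est_var_eq_total_effect:
  assumes "\<forall>i<n. N i \<subseteq> {..<n}"
  shows "est_var n T alpha c0 c N p = (1 / real n)\<^sup>2 * (\<Sum>j<n. (total_effect N c n j)\<^sup>2)
    * (\<integral>x. (weighted_treatment alpha p T x - (\<integral>x. weighted_treatment alpha p T x \<partial>uniform01))\<^sup>2 \<partial>uniform01)"
proof -
  interpret U: prob_space uniform01
    by (rule prob_space_uniform01)
  define m where "m = (\<integral>x. weighted_treatment alpha p T x \<partial>uniform01)"
  define Y where "Y x = weighted_treatment alpha p T x - m" for x
  have Y_bound: "\<bar>Y x\<bar> \<le> (\<Sum>t\<le>T. \<bar>alpha t\<bar>) + \<bar>m\<bar>" for x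
    using abs_weighted_treatment_le[of alpha p T x] by (simp add: Y_def)
  have Y_measurable: "Y \<in> borel_measurable uniform01"
    unfolding Y_def by measurable
  have Y_mean: "(\<integral>x. Y x \<partial>uniform01) = 0"
    by (simp add: Y_def m_def integrable_weighted_treatment U.prob_space)
  have "estimator n T alpha c0 c N p u - est_mean n T alpha c0 c N p
      = (1 / real n) * (\<Sum>j<n. total_effect N c n j * Y (u j))" for u
  proof -
    have "(\<Sum>j<n. total_effect N c n j * Y (u j))
        = (\<Sum>j<n. total_effect N c n j * weighted_treatment alpha p T (u j)) - (\<Sum>j<n. total_effect N c n j) * m"
      by (simp add: Y_def right_diff_distrib sum_subtractf sum_distrib_right)
    then show ?thesis
      unfolding estimator_eq_total_effect[OF assms] est_mean_eq_total_effect[OF assms] m_def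
      by (simp only: ring_distribs)
  qed
  then have "est_var n T alpha c0 c N p
      = (1 / real n)\<^sup>2 * (\<integral>u. (\<Sum>j<n. total_effect N c n j * Y (u j))\<^sup>2 \<partial>rollout_space n)"
    by (simp only: est_var_def power_mult_distrib integral_mult_right_zero)
  also have "\<dots> = (1 / real n)\<^sup>2 * (\<Sum>j<n. (total_effect N c n j)\<^sup>2) * (\<integral>x. (Y x)\<^sup>2 \<partial>uniform01)"
    unfolding rollout_space_def
    by (subst integral_PiM_square_weighted_sum[OF prob_space_uniform01 _ Y_measurable Y_bound Y_mean])
      simp_all
  finally show ?thesis
    by (simp add: Y_def m_def)
qed

lemma unbiasedI:
  assumes "\<forall>i<n. N i \<subseteq> {..<n}"
    and "sum alpha {..T} = 0" "(\<integral>x. weighted_treatment alpha p T x \<partial>uniform01) = 1"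
  shows "unbiased n T N p alpha"
  using assms
  by (simp add: unbiased_def est_mean_eq_total_effect TTE_eq_total_effect)

lemma unbiasedD:
  assumes N: "\<forall>i<n. N i \<subseteq> {..<n}" and unb: "unbiased n T N p alpha"
    and edge: "i < n" "j \<in> N i"
  shows "sum alpha {..T} = 0" "(\<integral>x. weighted_treatment alpha p T x \<partial>uniform01) = 1"
proof -
  have "0 < n"
    using edge by simp
  have "est_mean n T alpha (\<lambda>_. 1) (\<lambda>_ _. 0) N p = TTE n (\<lambda>_. 1) (\<lambda>_ _. 0) N"
    using unb by (simp add: unbiased_def)
  then show "sum alpha {..T} = 0"
    using \<open>0 < n\<close> by (simp add: est_mean_eq_total_effect[OF N] TTE_eq_total_effect[OF N] total_effect_def)
  define c :: "nat \<Rightarrow> nat \<Rightarrow> real" where "c i' j' = (if i' = i \<and> j' = j then 1 else 0)" for i' j'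
  have "total_effect N c n j' = (\<Sum>i'<n. if i' = i \<and> j' = j then 1 else 0)" for j'
    unfolding total_effect_def c_def using edge by (intro sum.cong) auto
  then have "total_effect N c n j' = (if j' = j then 1 else 0)" for j'
    using edge by (cases "j' = j") simp_all
  then have "(\<Sum>j'<n. total_effect N c n j') = 1"
    using edge N by auto
  moreover have "est_mean n T alpha (\<lambda>_. 0) c N p = TTE n (\<lambda>_. 0) c N"
    using unb by (simp add: unbiased_def)
  ultimately show "(\<integral>x. weighted_treatment alpha p T x \<partial>uniform01) = 1"
    using \<open>0 < n\<close> by (simp add: est_mean_eq_total_effect[OF N] TTE_eq_total_effect[OF N])
qed

lemma unbiased_extreme_stage_weights:
  assumes "\<forall>i<n. N i \<subseteq> {..<n}" "1 \<le> T" "0 \<le> p 0" "p 0 < p T" "p T \<le> 1"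
  shows "unbiased n T N p (extreme_stage_weights p T)"
  using sum_extreme_stage_weights[OF assms(2), of p "\<lambda>_. 1"]
    moments_weighted_treatment_extreme_stage_weights(1)[OF assms(2-5)]
  by (intro unbiasedI[OF assms(1)]) simp_all

lemma est_var_extreme_stage_weights_le:
  assumes N: "\<forall>i<n. N i \<subseteq> {..<n}" and T: "1 \<le> T"
    and p: "strict_mono_on {..T} p" "0 \<le> p 0" "p T \<le> 1"
    and unb: "unbiased n T N p alpha"
  shows "est_var n T (extreme_stage_weights p T) c0 c N p \<le> est_var n T alpha c0 c N p"
proof (cases "\<exists>i<n. N i \<noteq> {}")
  case True
  then obtain i j where "i < n" "j \<in> N i"
    by blast
  note alpha = unbiasedD[OF N unb this]
  have p_less: "p 0 < p T"
    using T p(1) by (auto intro: strict_mono_onD)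
  have p_range: "p 0 \<le> p t \<and> p t \<le> p T" if "t \<le> T" for t
    using that p(1) by (auto intro: strict_mono_on_leD)
  note extreme = moments_weighted_treatment_extreme_stage_weights[OF T p(2) p_less p(3)]
  have "(\<integral>x. (weighted_treatment (extreme_stage_weights p T) p T x)\<^sup>2 \<partial>uniform01)
      \<le> (\<integral>x. (weighted_treatment alpha p T x)\<^sup>2 \<partial>uniform01)"
    using second_moment_weighted_treatment_ge[OF p(2) p_less p(3) p_range alpha] extreme(2) by simp
  then show ?thesis
    unfolding est_var_eq_total_effect[OF N] variance_weighted_treatment
    by (intro mult_left_mono) (auto simp: extreme(1) alpha intro!: mult_nonneg_nonneg sum_nonneg)
next
  case False
  then show ?thesis
    by (simp add: est_var_eq_total_effect[OF N] total_effect_def)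
qed

theorem theorem4:
  fixes n T :: nat and N :: "nat \<Rightarrow> nat set" and p :: "nat \<Rightarrow> real"
    and alpha_opt :: "nat \<Rightarrow> real"
  assumes "n > 0" and "T \<ge> 1"
    and "\<forall>i<n. N i \<subseteq> {..<n}"
    and "strict_mono_on {..T} p" and "0 \<le> p 0" and "p T \<le> 1"
  defines "alpha_opt \<equiv> (\<lambda>t. if t = 0 then -1 / (p T - p 0)
                             else if t = T then 1 / (p T - p 0) else 0)"
  shows "unbiased n T N p alpha_opt \<and>
         (\<forall>alpha. unbiased n T N p alpha \<longrightarrow>
            (\<forall>c0 c. est_var n T alpha_opt c0 c N p \<le> est_var n T alpha c0 c N p))"
proof -
  have "p 0 < p T"
    using assms(2,4) by (auto intro: strict_mono_onD)
  moreover have "alpha_opt = extreme_stage_weights p T"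
    by (simp add: alpha_opt_def extreme_stage_weights_def fun_eq_iff)
  ultimately show ?thesis
    using assms(2-6) unbiased_extreme_stage_weights est_var_extreme_stage_weights_le by simp
qed

end
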